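(* Let $a<b$ be integers. Then there is a non-split short exact sequence in $\mathcal{C}_2$ \[ 0\to(-\infty,b)\xrightarrow{f}(a,b)\xrightarrow{g}(-\infty,a)\to0. \]
   Context: Let $R=\mathbb{C}[x,y]/(x^2)$, graded with $\deg x=1$, $\deg y=-1$; $M(j)_n=M_{j+n}$. $\mathcal{C}_2$ is the exact category of finitely generated $\mathbb{Z}$-graded maximal Cohen–Macaulay $R$-modules with degree-preserving morphisms. An arc is a pair $(a,b)$ with $a\in\mathbb{Z}\cup\{-\infty\}$, $b\in\mathbb{Z}$, $a<b$; a finite arc $(a,b)$ ($a\in\mathbb{Z}$) denotes the module $(x,y^{b-a-1})(1-b)$ (where $(x,y^0)=R$), and an infinite arc $(-\infty,b)$ denotes $\mathbb{C}[y](-b)=(R/(x))(-b)$. *)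

theory Defs
  imports Complex_Main "HOL-Computational_Algebra.Polynomial"
begin

text \<open>Elements of R = C[x,y]/(x^2) are written p(y) + x q(y), encoded as pairs (p,q).\<close>
type_synonym relt = "complex poly \<times> complex poly"

definition radd :: "relt \<Rightarrow> relt \<Rightarrow> relt" where
  "radd r s = (fst r + fst s, snd r + snd s)"

definition rmult :: "relt \<Rightarrow> relt \<Rightarrow> relt" where
  "rmult r s = (fst r * fst s, fst r * snd s + snd r * fst s)"

text \<open>Homogeneous part of R of degree m (deg x = 1, deg y = -1):
  spanned by y^(-m) (if m \<le> 0) and x y^(1-m) (if m \<le> 1).\<close>
definition rdeg_part :: "int \<Rightarrow> relt set" where
  "rdeg_part m = {(p, q).
     (\<exists>c. p = (if m \<le> 0 then monom c (nat (- m)) else 0)) \<and>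
     (\<exists>c. q = (if m \<le> 1 then monom c (nat (1 - m)) else 0))}"

text \<open>A concrete graded R-module: carrier (with addition radd, zero (0,0)),
  R-action, and homogeneous components.\<close>
record gmod =
  carrier :: "relt set"
  act :: "relt \<Rightarrow> relt \<Rightarrow> relt"
  comp :: "int \<Rightarrow> relt set"

text \<open>The ideal (x, y^n) of R, shifted by j: M(j)_d = M_(j+d).\<close>
definition ideal_mod :: "nat \<Rightarrow> int \<Rightarrow> gmod" where
  "ideal_mod n j = \<lparr> carrier = {(p, q). monom 1 n dvd p},
                    act = rmult,
                    comp = (\<lambda>d. rdeg_part (j + d) \<inter> {(p, q). monom 1 n dvd p}) \<rparr>"

text \<open>C[y] = R/(x) (elements (p,0), x acts as 0), shifted by j; C[y]_m = C y^(-m) for m \<le> 0.\<close>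
definition cy_mod :: "int \<Rightarrow> gmod" where
  "cy_mod j = \<lparr> carrier = {(p, q). q = 0},
               act = (\<lambda>r m. (fst r * fst m, 0)),
               comp = (\<lambda>d. {(p, q). q = 0 \<and>
                   (\<exists>c. p = (if j + d \<le> 0 then monom c (nat (- (j + d))) else 0))}) \<rparr>"

text \<open>Finite arc (a,b) = (x, y^(b-a-1))(1-b); infinite arc (-\<infinity>,b) = C[y](-b).\<close>
definition finite_arc :: "int \<Rightarrow> int \<Rightarrow> gmod" where
  "finite_arc a b = ideal_mod (nat (b - a - 1)) (1 - b)"

definition infinite_arc :: "int \<Rightarrow> gmod" where
  "infinite_arc b = cy_mod (- b)"

definition gmod_hom :: "gmod \<Rightarrow> gmod \<Rightarrow> (relt \<Rightarrow> relt) \<Rightarrow> bool" where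
  "gmod_hom M N f \<longleftrightarrow>
     (\<forall>m\<in>carrier M. f m \<in> carrier N) \<and>
     (\<forall>m1\<in>carrier M. \<forall>m2\<in>carrier M. f (radd m1 m2) = radd (f m1) (f m2)) \<and>
     (\<forall>r. \<forall>m\<in>carrier M. f (act M r m) = act N r (f m)) \<and>
     (\<forall>d. f ` comp M d \<subseteq> comp N d)"

definition short_exact :: "gmod \<Rightarrow> gmod \<Rightarrow> gmod \<Rightarrow> (relt \<Rightarrow> relt) \<Rightarrow> (relt \<Rightarrow> relt) \<Rightarrow> bool" where
  "short_exact M N P f g \<longleftrightarrow>
     gmod_hom M N f \<and> gmod_hom N P g \<and>
     inj_on f (carrier M) \<and> g ` carrier N = carrier P \<and>
     {n \<in> carrier N. g n = (0, 0)} = f ` carrier M"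

definition ses_splits :: "gmod \<Rightarrow> gmod \<Rightarrow> (relt \<Rightarrow> relt) \<Rightarrow> bool" where
  "ses_splits N P g \<longleftrightarrow> (\<exists>s. gmod_hom P N s \<and> (\<forall>p\<in>carrier P. g (s p) = p))"

end

theory Submission
  imports Defs
begin

text \<open>Multiplication by x embeds C[y](-b) into (x, y^n)(1-b) with image x R, and this image is
  the kernel of reducing mod x and dividing by y^n, which maps onto C[y](-a). The sequence does
  not split: x annihilates C[y], so a graded section s satisfies x s(1) = s(x 1) = 0; as
  x (p + x q) = x p, this forces s(1) \<in> x R, which the quotient map sends to 0 rather than 1.\<close>

lemma monom_1_dvd_monom_iff:
  fixes c :: "'a::field"
  assumes "c \<noteq> 0"
  shows "monom 1 n dvd monom c k \<longleftrightarrow> n \<le> k"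
  using assms by (auto simp: monom_1_dvd_iff')

lemma monom_div_monom_1:
  fixes c :: "'a::field"
  assumes "n \<le> k"
  shows "monom c k div monom 1 n = monom c (k - n)"
proof -
  have "monom c k = monom c (k - n) * monom 1 n"
    using assms by (simp add: mult_monom)
  then show ?thesis
    by simp
qed

definition mult_x :: "relt \<Rightarrow> relt" where
  "mult_x m = (0, fst m)"

definition div_y_pow :: "nat \<Rightarrow> relt \<Rightarrow> relt" where
  "div_y_pow n m = (fst m div monom 1 n, 0)"

lemma gmod_hom_mult_x: "gmod_hom (cy_mod (j - 1)) (ideal_mod n j) mult_x"
  unfolding gmod_hom_def
  by (auto simp: cy_mod_def ideal_mod_def mult_x_def radd_def rmult_def rdeg_part_def
      diff_diff_eq[symmetric] intro: exI[of _ 0])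

lemma div_y_pow_comp:
  assumes "m \<in> comp (ideal_mod n j) d"
  shows "div_y_pow n m \<in> comp (cy_mod (j + int n)) d"
proof -
  obtain p q e where m: "m = (p, q)" and dvd: "monom 1 n dvd p"
    and p: "p = (if j + d \<le> 0 then monom e (nat (- (j + d))) else 0)"
    using assms by (auto simp: ideal_mod_def rdeg_part_def)
  have "\<exists>c. p div monom 1 n = (if j + int n + d \<le> 0 then monom c (nat (- (j + int n + d))) else 0)"
  proof (cases "j + d \<le> 0 \<and> e \<noteq> 0")
    case True
    then have "n \<le> nat (- (j + d))"
      using dvd p monom_1_dvd_monom_iff by auto
    then show ?thesis
      using True p by (auto simp: monom_div_monom_1 intro!: exI[of _ e] arg_cong2[where f = monom])
  next
    case False
    then show ?thesis
      using p by (auto intro: exI[of _ 0])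
  qed
  then show ?thesis
    by (simp add: m div_y_pow_def cy_mod_def)
qed

lemma gmod_hom_div_y_pow: "gmod_hom (ideal_mod n j) (cy_mod (j + int n)) (div_y_pow n)"
  unfolding gmod_hom_def
  by (intro conjI allI image_subsetI div_y_pow_comp)
    (auto simp: cy_mod_def ideal_mod_def div_y_pow_def radd_def rmult_def div_add div_mult_swap)

lemma short_exact_mult_x_div_y_pow:
  "short_exact (cy_mod (j - 1)) (ideal_mod n j) (cy_mod (j + int n)) mult_x (div_y_pow n)"
  unfolding short_exact_def
proof (intro conjI gmod_hom_mult_x gmod_hom_div_y_pow)
  show "inj_on mult_x (carrier (cy_mod (j - 1)))"
    by (auto simp: inj_on_def mult_x_def cy_mod_def)
  have "(p, 0) \<in> div_y_pow n ` carrier (ideal_mod n j)" for p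
    by (rule image_eqI[of _ _ "(p * monom 1 n, 0)"]) (simp_all add: div_y_pow_def ideal_mod_def)
  then show "div_y_pow n ` carrier (ideal_mod n j) = carrier (cy_mod (j + int n))"
    by (auto simp: ideal_mod_def cy_mod_def div_y_pow_def)
  have "p = 0" if "monom 1 n dvd p" "p div monom 1 n = 0" for p :: "complex poly"
    using that by (metis dvd_div_mult_self mult_zero_left)
  then show "{m \<in> carrier (ideal_mod n j). div_y_pow n m = (0, 0)} =
      mult_x ` carrier (cy_mod (j - 1))"
    by (force simp: ideal_mod_def cy_mod_def div_y_pow_def mult_x_def)
qed

lemma gmod_hom_cy_mod_fst_eq_0:
  assumes hom: "gmod_hom (cy_mod k) N s" and act: "act N = rmult"
    and m: "m \<in> carrier (cy_mod k)"
  shows "fst (s m) = 0"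
proof -
  have lin: "s (act (cy_mod k) r m) = rmult r (s m)" for r
    using hom m act unfolding gmod_hom_def by metis
  have "(0, fst (s m)) = rmult (0, 1) (s m)"
    by (simp add: rmult_def)
  also have "\<dots> = s (0, 0)"
    using lin[of "(0, 1)"] by (simp add: cy_mod_def)
  also have "\<dots> = rmult (0, 0) (s m)"
    using lin[of "(0, 0)"] by (simp add: cy_mod_def)
  also have "\<dots> = (0, 0)"
    by (simp add: rmult_def)
  finally show ?thesis
    by simp
qed

lemma not_ses_splits_div_y_pow:
  assumes "act N = rmult"
  shows "\<not> ses_splits N (cy_mod k) (div_y_pow n)"
proof
  assume "ses_splits N (cy_mod k) (div_y_pow n)"
  then obtain s where hom: "gmod_hom (cy_mod k) N s"
    and right_inverse: "\<forall>p\<in>carrier (cy_mod k). div_y_pow n (s p) = p"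
    by (auto simp: ses_splits_def)
  have one: "(1, 0) \<in> carrier (cy_mod k)"
    by (simp add: cy_mod_def)
  have "div_y_pow n (s (1, 0)) = (0, 0)"
    using gmod_hom_cy_mod_fst_eq_0[OF hom assms one] by (simp add: div_y_pow_def)
  with right_inverse one show False
    by simp
qed

theorem lemma4p6:
  fixes a b :: int
  assumes "a < b"
  shows "\<exists>f g. short_exact (infinite_arc b) (finite_arc a b) (infinite_arc a) f g \<and>
               \<not> ses_splits (finite_arc a b) (infinite_arc a) g"
proof -
  define n where "n = nat (b - a - 1)"
  have arcs: "infinite_arc b = cy_mod ((1 - b) - 1)" "finite_arc a b = ideal_mod n (1 - b)"
    "infinite_arc a = cy_mod ((1 - b) + int n)"
    using assms by (simp_all add: infinite_arc_def finite_arc_def n_def)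
  have "act (ideal_mod n (1 - b)) = rmult"
    by (simp add: ideal_mod_def)
  then show ?thesis
    unfolding arcs
    using short_exact_mult_x_div_y_pow not_ses_splits_div_y_pow by (intro exI conjI)
qed

end
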